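(* Let $e$ be a hyperimaginary (in the monster model $\mathfrak{C}$ of a complete theory $T$). The following are equivalent: (1) $e$ is normal, i.e. $\mathrm{Fix}(e)$ is a normal subgroup of $\mathrm{Aut}(\mathfrak{C})$; (2) for every hyperimaginary $e'$ with $e'\equiv e$ (i.e. $e'=g(e)$ for some $g\in\mathrm{Aut}(\mathfrak{C})$), $e'\in\mathrm{dcl}(e)$; (3) $e\sim (f(e): f\in \mathrm{Aut}(\mathfrak{C}))$; (4) $e$ is equivalent ($\sim$) to a sequence enumerating the orbit $\{g(d):g\in\mathrm{Aut}(\mathfrak{C})\}$ of some hyperimaginary $d$.
   Context: $\mathfrak{C}$ is a monster model (large saturated, strongly homogeneous model) of a complete first-order theory $T$; "small" means of cardinality smaller than that of $\mathfrak{C}$. A hyperimaginary is an equivalence class $e=a_E$ of a possibly infinite small tuple $a$ of elements of $\mathfrak{C}$ under an equivalence relation $E$ that is type-definable without parameters ($0$-type-definable). Automorphisms of $\mathfrak{C}$ act on hyperimaginaries by $f(a_E)=f(a)_E$; a (small) sequence of hyperimaginaries is treated as a single hyperimaginary, fixed by $f$ iff each entry is fixed. $\mathrm{Fix}(e)=\mathrm{Aut}(\mathfrak{C}/e)=\{f\in\mathrm{Aut}(\mathfrak{C}): f(e)=e\}$. A hyperimaginary $d$ is definable over $e$ if $f(d)=d$ for all $f\in\mathrm{Fix}(e)$; $\mathrm{dcl}(e)$ is the class of hyperimaginaries definable over $e$. Two hyperimaginaries $e,d$ are equivalent, $e\sim d$, if $\mathrm{dcl}(e)=\mathrm{dcl}(d)$.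 *)

theory Defs
  imports "HOL-Algebra.Group" "HOL-Algebra.Coset"
begin

text \<open>A first-order structure on the universe of type 'a, given by its relations
  (function symbols and constants are encoded by their graphs).
  rel R xs: the tuple xs satisfies the relation symbol R.\<close>

definition Aut :: "('r \<Rightarrow> 'a list \<Rightarrow> bool) \<Rightarrow> ('a \<Rightarrow> 'a) set" where
  "Aut rel = {f. bij f \<and> (\<forall>R xs. rel R (map f xs) = rel R xs)}"

definition AutGrp :: "('r \<Rightarrow> 'a list \<Rightarrow> bool) \<Rightarrow> ('a \<Rightarrow> 'a) monoid" where
  "AutGrp rel = \<lparr>carrier = Aut rel, mult = (\<circ>), one = id\<rparr>"

text \<open>A hyperimaginary of sort 'i is represented by a pair (a, E): a tuple
  a indexed by 'i and an equivalence relation E on such tuples; it stands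
  for the class of a modulo E.\<close>

type_synonym ('i, 'a) hyperim = "('i \<Rightarrow> 'a) \<times> (('i \<Rightarrow> 'a) \<Rightarrow> ('i \<Rightarrow> 'a) \<Rightarrow> bool)"

text \<open>0-type-definability is approximated by automorphism invariance
  (every 0-type-definable relation is invariant).\<close>

definition is_hyperim :: "('r \<Rightarrow> 'a list \<Rightarrow> bool) \<Rightarrow> ('i, 'a) hyperim \<Rightarrow> bool" where
  "is_hyperim rel e \<longleftrightarrow> equivp (snd e) \<and>
     (\<forall>f\<in>Aut rel. \<forall>x y. snd e (f \<circ> x) (f \<circ> y) = snd e x y)"

definition heq :: "('i, 'a) hyperim \<Rightarrow> ('i, 'a) hyperim \<Rightarrow> bool" where
  "heq e d \<longleftrightarrow> snd e = snd d \<and> snd e (fst e) (fst d)"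

definition hact :: "('a \<Rightarrow> 'a) \<Rightarrow> ('i, 'a) hyperim \<Rightarrow> ('i, 'a) hyperim" where
  "hact f e = (f \<circ> fst e, snd e)"

definition Fix :: "('r \<Rightarrow> 'a list \<Rightarrow> bool) \<Rightarrow> ('i, 'a) hyperim \<Rightarrow> ('a \<Rightarrow> 'a) set" where
  "Fix rel e = {f \<in> Aut rel. heq (hact f e) e}"

definition definable_over ::
  "('r \<Rightarrow> 'a list \<Rightarrow> bool) \<Rightarrow> ('j, 'a) hyperim \<Rightarrow> ('i, 'a) hyperim \<Rightarrow> bool" where
  "definable_over rel d e \<longleftrightarrow> (\<forall>f\<in>Fix rel e. heq (hact f d) d)"

text \<open>Equivalence e ~ d, i.e. dcl(e) = dcl(d); since HOL cannot quantify over all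
  sorts, it is rendered as mutual membership e \<in> dcl(d), d \<in> dcl(e)
  (equivalent, as dcl is reflexive and transitive).\<close>
definition hequiv ::
  "('r \<Rightarrow> 'a list \<Rightarrow> bool) \<Rightarrow> ('i, 'a) hyperim \<Rightarrow> ('j, 'a) hyperim \<Rightarrow> bool" where
  "hequiv rel e d \<longleftrightarrow> definable_over rel e d \<and> definable_over rel d e"

definition hseq :: "'j set \<Rightarrow> ('j \<Rightarrow> ('i, 'a) hyperim) \<Rightarrow> ('j \<times> 'i, 'a) hyperim" where
  "hseq J h = ((\<lambda>(j, i). if j \<in> J then fst (h j) i else undefined),
               (\<lambda>x y. \<forall>j\<in>J. snd (h j) (\<lambda>i. x (j, i)) (\<lambda>i. y (j, i))))"

definition orbit_seq :: "('r \<Rightarrow> 'a list \<Rightarrow> bool) \<Rightarrow> ('i, 'a) hyperim \<Rightarrow> (('a \<Rightarrow> 'a) \<times> 'i, 'a) hyperim" where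
  "orbit_seq rel e = hseq (Aut rel) (\<lambda>f. hact f e)"

definition normal_hyperim :: "('r \<Rightarrow> 'a list \<Rightarrow> bool) \<Rightarrow> ('i, 'a) hyperim \<Rightarrow> bool" where
  "normal_hyperim rel e \<longleftrightarrow> Fix rel e \<lhd> AutGrp rel"

end

theory Submission
  imports Defs
begin

text \<open>Everything reduces to the fixer groups: d \<in> dcl(e) means Fix(e) \<subseteq> Fix(d), the fixer of
  g(e) is the conjugate g Fix(e) g\<inverse>, and the fixer of the orbit sequence of d is the
  intersection of all conjugates of Fix(d). Hence each of (1)--(3) says that Fix(e) lies in every
  conjugate of itself, while an intersection of all conjugates of a subgroup is always normal,
  which gives (4).\<close>

text \<open>Inside HOL-Algebra, plain inv parses as the group inverse of an implicit structure.\<close>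
abbreviation inv_fun :: "('a \<Rightarrow> 'b) \<Rightarrow> 'b \<Rightarrow> 'a" where
  "inv_fun f \<equiv> inv_into UNIV f"

lemma Aut_comp: "f \<in> Aut rel \<Longrightarrow> g \<in> Aut rel \<Longrightarrow> f \<circ> g \<in> Aut rel"
  by (auto simp: Aut_def bij_comp simp flip: map_map)

lemma id_in_Aut: "id \<in> Aut rel"
  by (simp add: Aut_def)

lemma bij_of_Aut: "f \<in> Aut rel \<Longrightarrow> bij f"
  by (simp add: Aut_def)

lemma inv_in_Aut:
  assumes "f \<in> Aut rel"
  shows "inv_fun f \<in> Aut rel"
proof -
  have bij: "bij f" and pres: "\<And>R xs. rel R (map f xs) = rel R xs"
    using assms by (auto simp: Aut_def)
  have "rel R (map (inv_fun f) xs) = rel R xs" for R xs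
    using pres[of R "map (inv_fun f) xs"] bij
    by (simp add: bij_is_surj surj_f_inv_f map_idI)
  then show ?thesis
    using bij bij_imp_bij_inv by (auto simp: Aut_def)
qed

lemma Aut_inv_comp: "f \<in> Aut rel \<Longrightarrow> inv_fun f \<circ> f = id"
  by (simp add: bij_of_Aut bij_is_inj)

lemma Aut_inv_fun_inv_fun: "f \<in> Aut rel \<Longrightarrow> inv_fun (inv_fun f) = f"
  by (simp add: bij_of_Aut inv_inv_eq)

lemma carrier_AutGrp: "carrier (AutGrp rel) = Aut rel"
  by (simp add: AutGrp_def)

lemma mult_AutGrp: "f \<otimes>\<^bsub>AutGrp rel\<^esub> g = f \<circ> g"
  by (simp add: AutGrp_def)

lemma group_AutGrp: "group (AutGrp rel)"
proof (rule groupI)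
  fix f assume "f \<in> carrier (AutGrp rel)"
  then show "\<exists>g\<in>carrier (AutGrp rel). g \<otimes>\<^bsub>AutGrp rel\<^esub> f = \<one>\<^bsub>AutGrp rel\<^esub>"
    by (intro bexI[of _ "inv_fun f"]) (auto simp: AutGrp_def inv_in_Aut Aut_inv_comp)
qed (auto simp: AutGrp_def Aut_comp id_in_Aut comp_assoc)

lemma AutGrp_m_inv: "f \<in> Aut rel \<Longrightarrow> inv\<^bsub>AutGrp rel\<^esub> f = inv_fun f"
  using group.inv_equality[OF group_AutGrp[of rel], of "inv_fun f" f]
  by (simp add: AutGrp_def inv_in_Aut Aut_inv_comp)

lemma inv_fun_conj_in_Aut_iff:
  assumes "g \<in> Aut rel"
  shows "inv_fun g \<circ> f \<circ> g \<in> Aut rel \<longleftrightarrow> f \<in> Aut rel"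
proof
  assume "inv_fun g \<circ> f \<circ> g \<in> Aut rel"
  then have "g \<circ> (inv_fun g \<circ> f \<circ> g) \<circ> inv_fun g \<in> Aut rel"
    using assms by (meson Aut_comp inv_in_Aut)
  moreover have "g \<circ> (inv_fun g \<circ> f \<circ> g) \<circ> inv_fun g = f"
    using bij_is_surj[OF bij_of_Aut[OF assms]] by (simp add: fun_eq_iff surj_f_inv_f)
  ultimately show "f \<in> Aut rel"
    by simp
qed (use assms in \<open>intro Aut_comp inv_in_Aut\<close>)

lemma hyperim_invariant:
  "is_hyperim rel d \<Longrightarrow> f \<in> Aut rel \<Longrightarrow> snd d (f \<circ> x) (f \<circ> y) = snd d x y"
  by (simp add: is_hyperim_def)

lemma hyperim_equivp: "is_hyperim rel d \<Longrightarrow> equivp (snd d)"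
  by (simp add: is_hyperim_def)

lemma is_hyperim_hact: "is_hyperim rel d \<Longrightarrow> is_hyperim rel (hact g d)"
  by (simp add: is_hyperim_def hact_def)

lemma hact_hact: "hact f (hact g d) = hact (f \<circ> g) d"
  by (simp add: hact_def comp_assoc)

lemma hact_id: "hact id d = d"
  by (simp add: hact_def)

lemma mem_Fix_iff: "f \<in> Fix rel d \<longleftrightarrow> f \<in> Aut rel \<and> snd d (f \<circ> fst d) (fst d)"
  by (simp add: Fix_def heq_def hact_def)

lemma Fix_subset_Aut: "Fix rel d \<subseteq> Aut rel"
  by (auto simp: Fix_def)

lemma definable_over_iff_Fix_subset: "definable_over rel d e \<longleftrightarrow> Fix rel e \<subseteq> Fix rel d"
  unfolding definable_over_def Fix_def by auto

lemma hequiv_iff_Fix_eq: "hequiv rel e d \<longleftrightarrow> Fix rel e = Fix rel d"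
  unfolding hequiv_def definable_over_iff_Fix_subset by auto

lemma Fix_heq:
  assumes d: "is_hyperim rel d" and "heq d' d"
  shows "Fix rel d' = Fix rel d"
proof -
  have E: "snd d' = snd d" and a: "snd d (fst d') (fst d)"
    using \<open>heq d' d\<close> by (auto simp: heq_def)
  have "snd d (f \<circ> fst d') (fst d') \<longleftrightarrow> snd d (f \<circ> fst d) (fst d)" if "f \<in> Aut rel" for f
  proof -
    have "snd d (f \<circ> fst d') (f \<circ> fst d)"
      using a hyperim_invariant[OF d that] by simp
    then show ?thesis
      using a equivp_transp[OF hyperim_equivp[OF d]] equivp_symp[OF hyperim_equivp[OF d]]
      by metis
  qed
  then show ?thesis
    by (auto simp: mem_Fix_iff E)
qed

lemma mem_Fix_hact_iff:
  assumes d: "is_hyperim rel d" and g: "g \<in> Aut rel"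
  shows "f \<in> Fix rel (hact g d) \<longleftrightarrow> inv_fun g \<circ> f \<circ> g \<in> Fix rel d"
proof -
  have "snd d (f \<circ> (g \<circ> fst d)) (g \<circ> fst d)
      \<longleftrightarrow> snd d (inv_fun g \<circ> (f \<circ> (g \<circ> fst d))) (inv_fun g \<circ> (g \<circ> fst d))"
    using hyperim_invariant[OF d inv_in_Aut[OF g]] by simp
  also have "\<dots> \<longleftrightarrow> snd d ((inv_fun g \<circ> f \<circ> g) \<circ> fst d) (fst d)"
    using Aut_inv_comp[OF g] by (simp add: comp_assoc flip: comp_assoc[of "inv_fun g" g])
  finally show ?thesis
    using inv_fun_conj_in_Aut_iff[OF g] by (simp add: mem_Fix_iff hact_def)
qed

lemma Fix_hseq: "Fix rel (hseq J h) = Aut rel \<inter> (\<Inter>j\<in>J. Fix rel (h j))"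
  by (auto simp: mem_Fix_iff hseq_def comp_def)

lemma is_hyperim_hseq:
  assumes "\<And>j. j \<in> J \<Longrightarrow> is_hyperim rel (h j)"
  shows "is_hyperim rel (hseq J h)"
proof -
  have eq: "equivp (snd (h j))" if "j \<in> J" for j
    using assms[OF that] by (rule hyperim_equivp)
  have "equivp (\<lambda>x y. \<forall>j\<in>J. snd (h j) (\<lambda>i. x (j, i)) (\<lambda>i. y (j, i)))"
  proof (intro equivpI reflpI sympI transpI ballI)
    fix x j assume "j \<in> J"
    then show "snd (h j) (\<lambda>i. x (j, i)) (\<lambda>i. x (j, i))"
      by (rule equivp_reflp[OF eq])
  next
    fix x y j assume "\<forall>j\<in>J. snd (h j) (\<lambda>i. x (j, i)) (\<lambda>i. y (j, i))" and j: "j \<in> J"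
    then show "snd (h j) (\<lambda>i. y (j, i)) (\<lambda>i. x (j, i))"
      using equivp_symp[OF eq[OF j], of "\<lambda>i. x (j, i)"] by blast
  next
    fix x y z j
    assume "\<forall>j\<in>J. snd (h j) (\<lambda>i. x (j, i)) (\<lambda>i. y (j, i))"
      and "\<forall>j\<in>J. snd (h j) (\<lambda>i. y (j, i)) (\<lambda>i. z (j, i))" and j: "j \<in> J"
    then show "snd (h j) (\<lambda>i. x (j, i)) (\<lambda>i. z (j, i))"
      using equivp_transp[OF eq[OF j], of "\<lambda>i. x (j, i)" "\<lambda>i. y (j, i)"] by blast
  qed
  moreover have "snd (h j) (\<lambda>i. f (x (j, i))) (\<lambda>i. f (y (j, i)))
      = snd (h j) (\<lambda>i. x (j, i)) (\<lambda>i. y (j, i))" if "j \<in> J" "f \<in> Aut rel" for f x y j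
    using hyperim_invariant[OF assms[OF that(1)] that(2)] by (simp add: comp_def)
  ultimately show ?thesis
    by (simp add: is_hyperim_def hseq_def cong: ball_cong)
qed

lemma Fix_orbit_seq: "Fix rel (orbit_seq rel d) = (\<Inter>g\<in>Aut rel. Fix rel (hact g d))"
proof -
  have "(\<Inter>g\<in>Aut rel. Fix rel (hact g d)) \<subseteq> Fix rel (hact id d)"
    by (rule INT_lower[OF id_in_Aut])
  also have "\<dots> \<subseteq> Aut rel"
    by (rule Fix_subset_Aut)
  finally show ?thesis
    unfolding orbit_seq_def Fix_hseq by (rule Int_absorb1)
qed

lemma is_hyperim_orbit_seq: "is_hyperim rel d \<Longrightarrow> is_hyperim rel (orbit_seq rel d)"
  by (simp add: orbit_seq_def is_hyperim_hseq is_hyperim_hact)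

lemma subgroup_Fix:
  assumes d: "is_hyperim rel d"
  shows "subgroup (Fix rel d) (AutGrp rel)"
proof
  show "Fix rel d \<subseteq> carrier (AutGrp rel)"
    using Fix_subset_Aut by (simp add: carrier_AutGrp)
  show "\<one>\<^bsub>AutGrp rel\<^esub> \<in> Fix rel d"
    using hyperim_equivp[OF d] by (simp add: mem_Fix_iff AutGrp_def id_in_Aut equivp_reflp)
next
  fix f g assume f: "f \<in> Fix rel d" and g: "g \<in> Fix rel d"
  have "snd d (f \<circ> (g \<circ> fst d)) (f \<circ> fst d)"
    using f g d by (simp add: mem_Fix_iff hyperim_invariant)
  moreover have "snd d (f \<circ> fst d) (fst d)"
    using f by (simp add: mem_Fix_iff)
  ultimately have "snd d (f \<circ> (g \<circ> fst d)) (fst d)"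
    by (rule equivp_transp[OF hyperim_equivp[OF d]])
  then show "f \<otimes>\<^bsub>AutGrp rel\<^esub> g \<in> Fix rel d"
    using f g by (simp add: mem_Fix_iff mult_AutGrp Aut_comp comp_assoc)
next
  fix f assume f: "f \<in> Fix rel d"
  then have f_Aut: "f \<in> Aut rel"
    by (simp add: mem_Fix_iff)
  have "snd d (inv_fun f \<circ> (f \<circ> fst d)) (inv_fun f \<circ> fst d)"
    using f d inv_in_Aut[OF f_Aut] by (simp add: mem_Fix_iff hyperim_invariant)
  then have "snd d (fst d) (inv_fun f \<circ> fst d)"
    by (simp add: Aut_inv_comp[OF f_Aut] flip: comp_assoc)
  then have "snd d (inv_fun f \<circ> fst d) (fst d)"
    by (rule equivp_symp[OF hyperim_equivp[OF d]])
  then show "inv\<^bsub>AutGrp rel\<^esub> f \<in> Fix rel d"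
    using f_Aut by (simp add: mem_Fix_iff AutGrp_m_inv inv_in_Aut)
qed

text \<open>A subgroup is normal iff it lies in each of its conjugates.\<close>
lemma normal_hyperim_iff_Fix_subset_Fix_hact:
  assumes d: "is_hyperim rel d"
  shows "normal_hyperim rel d \<longleftrightarrow> (\<forall>g\<in>Aut rel. Fix rel d \<subseteq> Fix rel (hact g d))"
proof -
  interpret G: group "AutGrp rel"
    by (rule group_AutGrp)
  have "normal_hyperim rel d \<longleftrightarrow> (\<forall>g\<in>Aut rel. \<forall>f\<in>Fix rel d. g \<circ> f \<circ> inv_fun g \<in> Fix rel d)"
    unfolding normal_hyperim_def G.normal_inv_iff using subgroup_Fix[OF d]
    by (simp add: carrier_AutGrp mult_AutGrp AutGrp_m_inv cong: ball_cong)
  also have "\<dots> \<longleftrightarrow> (\<forall>g\<in>Aut rel. Fix rel d \<subseteq> Fix rel (hact (inv_fun g) d))"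
    using mem_Fix_hact_iff[OF d inv_in_Aut] by (auto simp: Aut_inv_fun_inv_fun)
  also have "\<dots> \<longleftrightarrow> (\<forall>g\<in>Aut rel. Fix rel d \<subseteq> Fix rel (hact g d))"
    by (metis inv_in_Aut Aut_inv_fun_inv_fun)
  finally show ?thesis .
qed

lemma hequiv_normal_hyperim:
  "hequiv rel e d \<Longrightarrow> normal_hyperim rel d \<Longrightarrow> normal_hyperim rel e"
  by (simp add: hequiv_iff_Fix_eq normal_hyperim_def)

text \<open>Fix of the orbit sequence is the intersection of all conjugates of Fix(d), and
  conjugation merely permutes these conjugates.\<close>
lemma normal_hyperim_orbit_seq:
  assumes d: "is_hyperim rel d"
  shows "normal_hyperim rel (orbit_seq rel d)"
  unfolding normal_hyperim_iff_Fix_subset_Fix_hact[OF is_hyperim_orbit_seq[OF d]]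
proof (intro ballI subsetI)
  fix g f assume g: "g \<in> Aut rel" and f: "f \<in> Fix rel (orbit_seq rel d)"
  have "inv_fun g \<circ> f \<circ> g \<in> Fix rel (hact j d)" if j: "j \<in> Aut rel" for j
  proof -
    have "f \<in> Fix rel (hact g (hact j d))"
      using f Aut_comp[OF g j] by (simp add: Fix_orbit_seq hact_hact)
    then show ?thesis
      using mem_Fix_hact_iff[OF is_hyperim_hact[OF d] g] by simp
  qed
  then show "f \<in> Fix rel (hact g (orbit_seq rel d))"
    by (simp add: mem_Fix_hact_iff[OF is_hyperim_orbit_seq[OF d] g] Fix_orbit_seq)
qed

lemma normal_hyperim_iff_conjugates_definable:
  assumes e: "is_hyperim rel e"
  shows "normal_hyperim rel e \<longleftrightarrow>
    (\<forall>e'. is_hyperim rel e' \<and> (\<exists>g\<in>Aut rel. heq e' (hact g e)) \<longrightarrow> definable_over rel e' e)"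
  unfolding normal_hyperim_iff_Fix_subset_Fix_hact[OF e] definable_over_iff_Fix_subset
proof (intro iffI allI impI ballI)
  fix e' assume normal: "\<forall>g\<in>Aut rel. Fix rel e \<subseteq> Fix rel (hact g e)"
    and "is_hyperim rel e' \<and> (\<exists>g\<in>Aut rel. heq e' (hact g e))"
  then obtain g where "g \<in> Aut rel" "heq e' (hact g e)"
    by blast
  then show "Fix rel e \<subseteq> Fix rel e'"
    using normal Fix_heq[OF is_hyperim_hact[OF e]] by simp
next
  fix g assume "\<forall>e'. is_hyperim rel e' \<and> (\<exists>g\<in>Aut rel. heq e' (hact g e)) \<longrightarrow> Fix rel e \<subseteq> Fix rel e'"
    and "g \<in> Aut rel"
  moreover have "heq (hact g e) (hact g e)"
    using hyperim_equivp[OF e] by (simp add: heq_def hact_def equivp_reflp)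
  ultimately show "Fix rel e \<subseteq> Fix rel (hact g e)"
    using is_hyperim_hact[OF e] by blast
qed

lemma normal_hyperim_iff_hequiv_orbit_seq:
  assumes e: "is_hyperim rel e"
  shows "normal_hyperim rel e \<longleftrightarrow> hequiv rel e (orbit_seq rel e)"
proof -
  have "Fix rel (orbit_seq rel e) \<subseteq> Fix rel e"
    using INT_lower[OF id_in_Aut, of "\<lambda>g. Fix rel (hact g e)"] by (simp add: Fix_orbit_seq hact_id)
  then show ?thesis
    by (auto simp: normal_hyperim_iff_Fix_subset_Fix_hact[OF e] hequiv_iff_Fix_eq Fix_orbit_seq)
qed

theorem mainTheorem1:
  fixes rel :: "'r \<Rightarrow> 'a list \<Rightarrow> bool"
    and e :: "('i, 'a) hyperim"
  assumes "is_hyperim rel e"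
  shows "(normal_hyperim rel e \<longleftrightarrow>
            (\<forall>e'. is_hyperim rel e' \<and> (\<exists>g\<in>Aut rel. heq e' (hact g e)) \<longrightarrow> definable_over rel e' e))
       \<and> (normal_hyperim rel e \<longleftrightarrow> hequiv rel e (orbit_seq rel e))
       \<and> (normal_hyperim rel e \<longleftrightarrow>
            (\<exists>d :: ('i, 'a) hyperim. is_hyperim rel d \<and> hequiv rel e (orbit_seq rel d)))
       \<and> (\<forall>d :: ('k, 'a) hyperim. is_hyperim rel d \<and> hequiv rel e (orbit_seq rel d)
            \<longrightarrow> normal_hyperim rel e)"
proof (intro conjI)
  show "\<forall>d :: ('k, 'a) hyperim. is_hyperim rel d \<and> hequiv rel e (orbit_seq rel d)
          \<longrightarrow> normal_hyperim rel e"
    using hequiv_normal_hyperim normal_hyperim_orbit_seq by blast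
  show "normal_hyperim rel e \<longleftrightarrow>
      (\<exists>d :: ('i, 'a) hyperim. is_hyperim rel d \<and> hequiv rel e (orbit_seq rel d))"
    using normal_hyperim_iff_hequiv_orbit_seq[OF assms] assms
      hequiv_normal_hyperim normal_hyperim_orbit_seq by blast
qed (use normal_hyperim_iff_conjugates_definable[OF assms]
      normal_hyperim_iff_hequiv_orbit_seq[OF assms] in simp_all)

end
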